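(* Let $k_1,k_2$ be constants with $0<k_2\le 1$ and $8k_2^2+6k_1-3<0$. Let $J'=(z_w,z_w')$ be a nonempty open interval, let $r:J'\to\mathbb{R}$ be differentiable, and let $h:J'\to\mathbb{R}$ be differentiable with $\dot h(z)=1+h(z)^2-2r(z)h(z)$ on $J'$, having exactly one zero $z_*\in J'$. Let $G(z)=z-\dfrac{2h(z)}{2+h(z)^2-2r(z)h(z)}$ and $z_{n+1}=G(z_n)$. (1) If $0<r(z)<k_2$ and $\dot r(z)<k_1$ for all $z\in(z_*,z_w')$, then for every $z_0\in(z_*,z_w')$ the iterates are well defined and $(z_n)$ decreases monotonically to $z_*$. (2) If $-k_2<r(z)<0$ and $\dot r(z)<k_1$ for all $z\in(z_w,z_* )$, then for every $z_0\in(z_w,z_* )$ the iterates are well defined and $(z_n)$ increases monotonically to $z_*$.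
   Context: $\dot{}$ denotes differentiation with respect to $z$. Here $h<0$ on $(z_w,z_* )$ and $h>0$ on $(z_*,z_w')$. *)

theory Defs
  imports "HOL-Analysis.Analysis"
begin

definition newton_map :: "(real \<Rightarrow> real) \<Rightarrow> (real \<Rightarrow> real) \<Rightarrow> real \<Rightarrow> real" where
  "newton_map r h z = z - 2 * h z / (2 + (h z)^2 - 2 * r z * h z)"

end

theory Submission
  imports Defs
begin

text \<open>
  Differentiating \<open>G = newton_map r h\<close> and using the Riccati equation for \<open>h\<close> gives
  \<open>G' = h\<^sup>2 Q / D\<^sup>2\<close> with \<open>D = 2 + h\<^sup>2 - 2 r h\<close> and
  \<open>3 Q = (3 h - 4 r)\<^sup>2 + 6 - 4 r\<^sup>2 - 12 r'\<close>.
  For \<open>|r| < k\<^sub>2 \<le> 1\<close> the denominator \<open>D\<close> is positive, and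
  \<open>8 k\<^sub>2\<^sup>2 + 6 k\<^sub>1 < 3\<close> makes \<open>Q\<close> positive, so \<open>G\<close> is strictly increasing on
  each side of the zero \<open>z\<^sub>*\<close> of \<open>h\<close>, where \<open>G z\<^sub>* = z\<^sub>*\<close>.
  Right of \<open>z\<^sub>*\<close> this gives \<open>z\<^sub>* < G z < z\<close>, so the iterates decrease to a limit,
  which by continuity is a fixed point of \<open>G\<close>, hence \<open>z\<^sub>*\<close>.
  The left side follows by the reflection \<open>r, h \<mapsto> -r(-z), -h(-z)\<close>, which preserves the
  Riccati equation and conjugates \<open>G\<close> by \<open>z \<mapsto> -z\<close>.
\<close>

lemma newton_map_has_real_derivative:
  fixes r h :: "real \<Rightarrow> real"
  assumes h_deriv: "(h has_real_derivative (1 + (h x)^2 - 2 * r x * h x)) (at x)"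
    and r_deriv: "(r has_real_derivative r') (at x)"
    and denom: "2 + (h x)^2 - 2 * r x * h x \<noteq> 0"
  shows "(newton_map r h has_real_derivative
     (h x)^2 * (3 * (h x)^2 - 8 * r x * h x + 4 * (r x)^2 + 2 - 4 * r')
       / (2 + (h x)^2 - 2 * r x * h x)^2) (at x)"
proof -
  define H R where "H = h x" and "R = r x"
  define H' D where "H' = 1 + H^2 - 2 * R * H" and "D = 2 + H^2 - 2 * R * H"
  have "(newton_map r h has_real_derivative
      1 - (2 * H' * D - 2 * H * (2 * H * H' - 2 * (r' * H + R * H'))) / D^2) (at x)"
    unfolding newton_map_def [abs_def] using h_deriv r_deriv denom
    by (auto intro!: derivative_eq_intros simp: H_def R_def H'_def D_def power2_eq_square algebra_simps)
  also have "1 - (2 * H' * D - 2 * H * (2 * H * H' - 2 * (r' * H + R * H'))) / D^2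
      = H^2 * (3 * H^2 - 8 * R * H + 4 * R^2 + 2 - 4 * r') / D^2"
    using denom by (simp add: H_def R_def H'_def D_def divide_simps) algebra
  finally show ?thesis by (simp add: H_def R_def D_def)
qed

lemma newton_denominator_pos:
  fixes H R :: real
  assumes "\<bar>R\<bar> < 1"
  shows "0 < 2 + H^2 - 2 * R * H"
proof -
  have "R^2 < 1" using assms by (simp add: abs_square_less_1)
  moreover have "2 + H^2 - 2 * R * H = 1 + (H - R)^2 + (1 - R^2)"
    by (simp add: power2_eq_square algebra_simps)
  ultimately show ?thesis using zero_le_power2[of "H - R"] by linarith
qed

lemma newton_derivative_factor_pos:
  fixes H R r' k1 k2 :: real
  assumes "\<bar>R\<bar> < k2" "r' < k1" "8 * k2^2 + 6 * k1 - 3 < 0"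
  shows "0 < 3 * H^2 - 8 * R * H + 4 * R^2 + 2 - 4 * r'"
proof -
  have "R^2 < k2^2" using assms(1) by (intro power2_strict_mono) simp
  then have "0 < 6 - 4 * R^2 - 12 * r'"
    using assms(2,3) zero_le_power2 [of k2] by linarith
  then have "0 < ((3 * H - 4 * R)^2 + (6 - 4 * R^2 - 12 * r')) / 3"
    by (simp add: add_nonneg_pos)
  also have "\<dots> = 3 * H^2 - 8 * R * H + 4 * R^2 + 2 - 4 * r'"
    by (simp add: field_simps power2_eq_square)
  finally show ?thesis .
qed

lemma isCont_newton_map:
  fixes r h :: "real \<Rightarrow> real"
  assumes "isCont h x" "isCont r x" "2 + (h x)^2 - 2 * r x * h x \<noteq> 0"
  shows "isCont (newton_map r h) x"
  unfolding newton_map_def [abs_def] using assms by (intro continuous_intros) auto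

lemma has_real_derivative_reflect:
  fixes f :: "real \<Rightarrow> real"
  assumes "(f has_real_derivative f') (at (- x))"
  shows "((\<lambda>z. - f (- z)) has_real_derivative f') (at x)"
  using DERIV_minus [OF assms [unfolded DERIV_mirror]] by simp

lemma funpow_newton_map_reflect:
  "(newton_map (\<lambda>z. - r (- z)) (\<lambda>z. - h (- z)) ^^ n) (- z) = - (newton_map r h ^^ n) z"
  by (induction n) (simp_all add: newton_map_def)

lemma iterates_decrease_to_left_endpoint:
  fixes G :: "real \<Rightarrow> real"
  assumes step: "\<And>z. z \<in> {a<..<c} \<Longrightarrow> a < G z \<and> G z < z"
    and cont: "\<And>z. z \<in> {a<..<c} \<Longrightarrow> isCont G z"
    and z0: "z0 \<in> {a<..<c}"
  shows "\<forall>n. (G ^^ n) z0 \<in> {a<..<c}" "decseq (\<lambda>n. (G ^^ n) z0)" "(\<lambda>n. (G ^^ n) z0) \<longlonglongrightarrow> a"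
proof -
  define X where "X n = (G ^^ n) z0" for n
  have X_Suc: "X (Suc n) = G (X n)" for n by (simp add: X_def)
  have X_mem: "X n \<in> {a<..<c}" for n
  proof (induction n)
    case 0
    show ?case using z0 by (simp add: X_def)
  next
    case (Suc n)
    show ?case using step [OF Suc] Suc by (auto simp: X_Suc)
  qed
  have X_dec: "decseq X"
    using step [OF X_mem] by (intro decseq_SucI) (simp add: X_Suc less_imp_le)
  have X_lower: "a \<le> X n" for n
    using X_mem [of n] by simp
  obtain L where L: "X \<longlonglongrightarrow> L" "\<forall>n. L \<le> X n"
    using decseq_convergent [OF X_dec] X_lower by blast
  have "L = a"
  proof (rule ccontr)
    assume "L \<noteq> a"
    moreover have "a \<le> L"
      using X_lower by (intro LIMSEQ_le_const [OF L(1)]) simp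
    moreover have "L < c"
      using spec [OF L(2), of 0] X_mem [of 0] by simp
    ultimately have L_mem: "L \<in> {a<..<c}" by simp
    have "(\<lambda>n. G (X n)) \<longlonglongrightarrow> G L"
      using isCont_tendsto_compose [OF cont [OF L_mem] L(1)] .
    moreover have "(\<lambda>n. G (X n)) \<longlonglongrightarrow> L"
      using LIMSEQ_Suc [OF L(1)] by (simp add: X_Suc)
    ultimately have "G L = L" by (rule LIMSEQ_unique)
    then show False using step [OF L_mem] by simp
  qed
  then show "\<forall>n. (G ^^ n) z0 \<in> {a<..<c}" "decseq (\<lambda>n. (G ^^ n) z0)"
    "(\<lambda>n. (G ^^ n) z0) \<longlonglongrightarrow> a"
    using X_mem X_dec L(1) by (simp_all add: X_def [abs_def])
qed

lemma newton_map_iterates_decrease: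
  fixes r h r' :: "real \<Rightarrow> real"
  assumes k12: "8 * k2^2 + 6 * k1 - 3 < 0" and k2: "k2 \<le> 1"
    and h_ode: "\<And>z. z \<in> {a..<b} \<Longrightarrow> (h has_real_derivative (1 + (h z)^2 - 2 * r z * h z)) (at z)"
    and r_deriv: "\<And>z. z \<in> {a..<b} \<Longrightarrow> (r has_real_derivative r' z) (at z)"
    and h_zero: "h a = 0"
    and h_pos: "\<And>z. z \<in> {a<..<b} \<Longrightarrow> 0 < h z"
    and r_bound: "\<And>z. z \<in> {a<..<b} \<Longrightarrow> \<bar>r z\<bar> < k2"
    and r'_bound: "\<And>z. z \<in> {a<..<b} \<Longrightarrow> r' z < k1"
    and z0: "z0 \<in> {a<..<b}"
  shows "(\<forall>n. (newton_map r h ^^ n) z0 \<in> {a<..<b}) \<and> decseq (\<lambda>n. (newton_map r h ^^ n) z0)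
    \<and> (\<lambda>n. (newton_map r h ^^ n) z0) \<longlonglongrightarrow> a"
proof -
  define G where "G = newton_map r h"
  define D where "D z = 2 + (h z)^2 - 2 * r z * h z" for z
  have D_pos: "0 < D z" if "z \<in> {a<..<b}" for z
    using newton_denominator_pos [of "r z" "h z"] r_bound [OF that] k2 by (simp add: D_def)
  have G_cont: "isCont G z" if "z \<in> {a..<b}" for z
    unfolding G_def
  proof (rule isCont_newton_map)
    show "isCont h z" "isCont r z"
      using h_ode [OF that] r_deriv [OF that] by (auto intro: DERIV_isCont)
    show "2 + (h z)^2 - 2 * r z * h z \<noteq> 0"
      using that h_zero D_pos [of z] by (cases "z = a") (auto simp: D_def)
  qed
  have G_deriv_pos: "\<exists>d. (G has_real_derivative d) (at z) \<and> 0 < d" if "z \<in> {a<..<b}" for z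
  proof (intro exI conjI)
    show "(G has_real_derivative
        (h z)^2 * (3 * (h z)^2 - 8 * r z * h z + 4 * (r z)^2 + 2 - 4 * r' z) / (D z)^2) (at z)"
      unfolding G_def D_def using that D_pos [OF that]
      by (intro newton_map_has_real_derivative h_ode r_deriv) (auto simp: D_def)
    show "0 < (h z)^2 * (3 * (h z)^2 - 8 * r z * h z + 4 * (r z)^2 + 2 - 4 * r' z) / (D z)^2"
      using h_pos [OF that] D_pos [OF that]
        newton_derivative_factor_pos [OF r_bound [OF that] r'_bound [OF that] k12] by simp
  qed
  have G_step: "a < G z \<and> G z < z" if z: "z \<in> {a<..<b}" for z
  proof
    have "G a < G z"
    proof (rule DERIV_pos_imp_increasing_open [of a z G])
      show "continuous_on {a..z} G"
        using z G_cont by (intro continuous_at_imp_continuous_on) auto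
    qed (use z G_deriv_pos in auto)
    then show "a < G z" by (simp add: G_def newton_map_def h_zero)
    show "G z < z"
      using h_pos [OF z] D_pos [OF z] by (simp add: G_def D_def newton_map_def)
  qed
  show ?thesis
    using iterates_decrease_to_left_endpoint [of a b G z0, OF G_step] G_cont z0
    unfolding G_def by auto
qed

lemma newton_map_iterates_increase:
  fixes r h r' :: "real \<Rightarrow> real"
  assumes k12: "8 * k2^2 + 6 * k1 - 3 < 0" and k2: "k2 \<le> 1"
    and h_ode: "\<And>z. z \<in> {a<..b} \<Longrightarrow> (h has_real_derivative (1 + (h z)^2 - 2 * r z * h z)) (at z)"
    and r_deriv: "\<And>z. z \<in> {a<..b} \<Longrightarrow> (r has_real_derivative r' z) (at z)"
    and h_zero: "h b = 0"
    and h_neg: "\<And>z. z \<in> {a<..<b} \<Longrightarrow> h z < 0"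
    and r_bound: "\<And>z. z \<in> {a<..<b} \<Longrightarrow> \<bar>r z\<bar> < k2"
    and r'_bound: "\<And>z. z \<in> {a<..<b} \<Longrightarrow> r' z < k1"
    and z0: "z0 \<in> {a<..<b}"
  shows "(\<forall>n. (newton_map r h ^^ n) z0 \<in> {a<..<b}) \<and> incseq (\<lambda>n. (newton_map r h ^^ n) z0)
    \<and> (\<lambda>n. (newton_map r h ^^ n) z0) \<longlonglongrightarrow> b"
proof -
  let ?r = "\<lambda>z. - r (- z)" and ?h = "\<lambda>z. - h (- z)"
  have h_ode': "(?h has_real_derivative (1 + (?h z)^2 - 2 * ?r z * ?h z)) (at z)"
    if "z \<in> {- b..<- a}" for z
    using has_real_derivative_reflect [OF h_ode [of "- z"]] that by simp
  have r_deriv': "(?r has_real_derivative r' (- z)) (at z)" if "z \<in> {- b..<- a}" for z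
    using has_real_derivative_reflect [OF r_deriv [of "- z"]] that by simp
  have "0 < ?h z" "\<bar>?r z\<bar> < k2" "r' (- z) < k1" if "z \<in> {- b<..<- a}" for z
    using h_neg [of "- z"] r_bound [of "- z"] r'_bound [of "- z"] that by auto
  from newton_map_iterates_decrease
      [where a = "- b" and b = "- a" and ?z0.0 = "- z0", OF k12 k2 h_ode' r_deriv' _ this]
  show ?thesis
    using h_zero z0
    by (auto simp: funpow_newton_map_reflect monotone_on_def tendsto_minus_cancel_left [symmetric])
qed

theorem theorem3p7:
  fixes k1 k2 zw zw' zs :: real and r h :: "real \<Rightarrow> real"
  assumes k2: "0 < k2" "k2 \<le> 1"
    and k12: "8 * k2^2 + 6 * k1 - 3 < 0"
    and J: "zw < zw'"
    and rdiff: "\<forall>z\<in>{zw<..<zw'}. r differentiable (at z)"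
    and hode: "\<forall>z\<in>{zw<..<zw'}. (h has_real_derivative (1 + (h z)^2 - 2 * r z * h z)) (at z)"
    and zs: "zs \<in> {zw<..<zw'}" "h zs = 0"
    and zs_unique: "\<forall>z\<in>{zw<..<zw'}. h z = 0 \<longrightarrow> z = zs"
    and hneg: "\<forall>z\<in>{zw<..<zs}. h z < 0"
    and hpos: "\<forall>z\<in>{zs<..<zw'}. h z > 0"
  shows
    "((\<forall>z\<in>{zs<..<zw'}. 0 < r z \<and> r z < k2 \<and> deriv r z < k1) \<longrightarrow>
       (\<forall>z0\<in>{zs<..<zw'}.
          (\<forall>n. (newton_map r h ^^ n) z0 \<in> {zw<..<zw'} \<and>
               2 + (h ((newton_map r h ^^ n) z0))^2
                 - 2 * r ((newton_map r h ^^ n) z0) * h ((newton_map r h ^^ n) z0) \<noteq> 0)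
          \<and> decseq (\<lambda>n. (newton_map r h ^^ n) z0)
          \<and> (\<lambda>n. (newton_map r h ^^ n) z0) \<longlonglongrightarrow> zs))
     \<and>
     ((\<forall>z\<in>{zw<..<zs}. -k2 < r z \<and> r z < 0 \<and> deriv r z < k1) \<longrightarrow>
       (\<forall>z0\<in>{zw<..<zs}.
          (\<forall>n. (newton_map r h ^^ n) z0 \<in> {zw<..<zw'} \<and>
               2 + (h ((newton_map r h ^^ n) z0))^2
                 - 2 * r ((newton_map r h ^^ n) z0) * h ((newton_map r h ^^ n) z0) \<noteq> 0)
          \<and> incseq (\<lambda>n. (newton_map r h ^^ n) z0)
          \<and> (\<lambda>n. (newton_map r h ^^ n) z0) \<longlonglongrightarrow> zs))"
proof -
  define X where "X z0 n = (newton_map r h ^^ n) z0" for z0 n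
  define D where "D z = 2 + (h z)^2 - 2 * r z * h z" for z
  have r_deriv: "(r has_real_derivative deriv r z) (at z)" if "z \<in> {zw<..<zw'}" for z
    using rdiff that by (simp add: DERIV_deriv_iff_real_differentiable)
  have D_ne: "D z \<noteq> 0" if "\<bar>r z\<bar> < k2" for z
    using newton_denominator_pos [of "r z" "h z"] that k2(2) by (simp add: D_def)
  have right: "(\<forall>n. X z0 n \<in> {zw<..<zw'} \<and> D (X z0 n) \<noteq> 0) \<and> decseq (X z0) \<and> X z0 \<longlonglongrightarrow> zs"
    if r_right: "\<forall>z\<in>{zs<..<zw'}. 0 < r z \<and> r z < k2 \<and> deriv r z < k1"
      and z0: "z0 \<in> {zs<..<zw'}" for z0
  proof -
    have r_bounds: "\<bar>r z\<bar> < k2" "deriv r z < k1" if "z \<in> {zs<..<zw'}" for z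
      using bspec [OF r_right that] by auto
    have "(\<forall>n. X z0 n \<in> {zs<..<zw'}) \<and> decseq (X z0) \<and> X z0 \<longlonglongrightarrow> zs"
      unfolding X_def [abs_def]
      by (rule newton_map_iterates_decrease [where r' = "deriv r", OF k12 k2(2)])
        (use zs hode r_deriv hpos z0 r_bounds in auto)
    then show ?thesis using zs(1) r_bounds(1) D_ne by (fastforce intro: less_trans)
  qed
  have left: "(\<forall>n. X z0 n \<in> {zw<..<zw'} \<and> D (X z0 n) \<noteq> 0) \<and> incseq (X z0) \<and> X z0 \<longlonglongrightarrow> zs"
    if r_left: "\<forall>z\<in>{zw<..<zs}. -k2 < r z \<and> r z < 0 \<and> deriv r z < k1"
      and z0: "z0 \<in> {zw<..<zs}" for z0
  proof -
    have r_bounds: "\<bar>r z\<bar> < k2" "deriv r z < k1" if "z \<in> {zw<..<zs}" for z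
      using bspec [OF r_left that] by auto
    have "(\<forall>n. X z0 n \<in> {zw<..<zs}) \<and> incseq (X z0) \<and> X z0 \<longlonglongrightarrow> zs"
      unfolding X_def [abs_def]
      by (rule newton_map_iterates_increase [where r' = "deriv r", OF k12 k2(2)])
        (use zs hode r_deriv hneg z0 r_bounds in auto)
    then show ?thesis using zs(1) r_bounds(1) D_ne by (fastforce intro: less_trans)
  qed
  show ?thesis
    using right left unfolding X_def [abs_def] D_def by blast
qed

end
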